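(* Let $\mathfrak{g}$ be a $\mathrm{Lie}$-nilpotent Leibniz algebra and $f:\mathfrak{g}\twoheadrightarrow\mathfrak{q}$ a surjective homomorphism of Leibniz algebras. If $\ker(f)\subseteq[\mathfrak{g},\mathfrak{g}]_{\mathrm{Lie}}$ and $\mathcal{M}^{\mathrm{Lie}}(\mathfrak{q})=0$, then $f$ is an isomorphism. In particular, if $\mathcal{M}^{\mathrm{Lie}}(\mathfrak{g}/[\mathfrak{g},\mathfrak{g}]_{\mathrm{Lie}})=0$, then $\mathcal{M}^{\mathrm{Lie}}(\mathfrak{g})=0$.
   Context: Fix a field $\mathbb{K}$ with $\frac12\in\mathbb{K}$. A Leibniz algebra is a $\mathbb{K}$-vector space with a bilinear bracket satisfying $[x,[y,z]]=[[x,y],z]-[[x,z],y]$. For two-sided ideals $\mathfrak{m},\mathfrak{n}$, $[\mathfrak{m},\mathfrak{n}]_{\mathrm{Lie}}$ is the subspace spanned by all $[m,n]+[n,m]$. Lower $\mathrm{Lie}$-central series: $\mathfrak{g}^{[1]}=\mathfrak{g}$, $\mathfrak{g}^{[i]}=[\mathfrak{g}^{[i-1]},\mathfrak{g}]_{\mathrm{Lie}}$; $\mathfrak{g}$ is $\mathrm{Lie}$-nilpotent if some $\mathfrak{g}^{[k]}=0$. For a free presentation $0\to\mathfrak{r}\to\mathfrak{f}\to\mathfrak{g}\to0$ ($\mathfrak{f}$ free Leibniz), $\mathcal{M}^{\mathrm{Lie}}(\mathfrak{g})=\frac{\mathfrak{r}\cap[\mathfrak{f},\mathfrak{f}]_{\mathrm{Lie}}}{[\mathfrak{f},\mathfrak{r}]_{\mathrm{Lie}}}$,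 independent of the presentation up to isomorphism. *)

theory Defs
  imports Main "HOL.Vector_Spaces" "HOL-Library.Function_Algebras"
begin

definition leibniz :: "('k::field \<Rightarrow> 'a::ab_group_add \<Rightarrow> 'a) \<Rightarrow> 'a set \<Rightarrow> ('a \<Rightarrow> 'a \<Rightarrow> 'a) \<Rightarrow> bool" where
  "leibniz sc L br \<longleftrightarrow> vector_space sc \<and> module.subspace sc L
     \<and> (\<forall>x\<in>L. \<forall>y\<in>L. br x y \<in> L)
     \<and> (\<forall>x\<in>L. \<forall>y\<in>L. \<forall>z\<in>L. br (x + y) z = br x z + br y z \<and> br x (y + z) = br x y + br x z)
     \<and> (\<forall>c. \<forall>x\<in>L. \<forall>y\<in>L. br (sc c x) y = sc c (br x y) \<and> br x (sc c y) = sc c (br x y))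
     \<and> (\<forall>x\<in>L. \<forall>y\<in>L. \<forall>z\<in>L. br x (br y z) = br (br x y) z - br (br x z) y)"

definition lie_sp :: "('k::field \<Rightarrow> 'a::ab_group_add \<Rightarrow> 'a) \<Rightarrow> ('a \<Rightarrow> 'a \<Rightarrow> 'a) \<Rightarrow> 'a set \<Rightarrow> 'a set \<Rightarrow> 'a set" where
  "lie_sp sc br M N = module.span sc {br m n + br n m | m n. m \<in> M \<and> n \<in> N}"

(* lower Lie-central series, shifted: lcs n = g^[n+1] *)
fun lie_lcs :: "('k::field \<Rightarrow> 'a::ab_group_add \<Rightarrow> 'a) \<Rightarrow> ('a \<Rightarrow> 'a \<Rightarrow> 'a) \<Rightarrow> 'a set \<Rightarrow> nat \<Rightarrow> 'a set" where
  "lie_lcs sc br L 0 = L"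
| "lie_lcs sc br L (Suc n) = lie_sp sc br (lie_lcs sc br L n) L"

definition lie_nilpotent :: "('k::field \<Rightarrow> 'a::ab_group_add \<Rightarrow> 'a) \<Rightarrow> ('a \<Rightarrow> 'a \<Rightarrow> 'a) \<Rightarrow> 'a set \<Rightarrow> bool" where
  "lie_nilpotent sc br L \<longleftrightarrow> (\<exists>k. lie_lcs sc br L k = {0})"

definition leib_hom :: "('k::field \<Rightarrow> 'a::ab_group_add \<Rightarrow> 'a) \<Rightarrow> ('a \<Rightarrow> 'a \<Rightarrow> 'a)
     \<Rightarrow> ('k \<Rightarrow> 'b::ab_group_add \<Rightarrow> 'b) \<Rightarrow> ('b \<Rightarrow> 'b \<Rightarrow> 'b) \<Rightarrow> ('a \<Rightarrow> 'b) \<Rightarrow> bool" where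
  "leib_hom sa ba sb bb f \<longleftrightarrow> Vector_Spaces.linear sa sb f \<and> (\<forall>x y. f (ba x y) = bb (f x) (f y))"

(* ---- The free Leibniz algebra on a set of generators (Loday's construction) ----
   Underlying space: finitely supported functions on nonempty words, i.e. the reduced
   tensor algebra T(V) with V having basis the generators.  Bracket on words:
     [u, v] = u v   (v a letter),   [u, w v] = [u, w] v - [u v, w].
   The second word is stored reversed to make the recursion structural. *)

definition fsc :: "'k::field \<Rightarrow> ('x list \<Rightarrow> 'k) \<Rightarrow> ('x list \<Rightarrow> 'k)" where
  "fsc c \<phi> = (\<lambda>w. c * \<phi> w)"

definition fdelta :: "'x list \<Rightarrow> ('x list \<Rightarrow> 'k::field)" where
  "fdelta u = (\<lambda>w. if w = u then 1 else 0)"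

(* right multiplication by a letter v: linear extension of w \<mapsto> w v *)
definition fapp :: "'x \<Rightarrow> ('x list \<Rightarrow> 'k::field) \<Rightarrow> ('x list \<Rightarrow> 'k)" where
  "fapp v \<phi> = (\<lambda>w. if w \<noteq> [] \<and> last w = v then \<phi> (butlast w) else 0)"

fun wbr_rev :: "'x list \<Rightarrow> 'x list \<Rightarrow> ('x list \<Rightarrow> 'k::field)" where
  "wbr_rev u [] = 0"
| "wbr_rev u [v] = fdelta (u @ [v])"
| "wbr_rev u (v # v' # r) = fapp v (wbr_rev u (v' # r)) - wbr_rev (u @ [v]) (v' # r)"

definition wbr :: "'x list \<Rightarrow> 'x list \<Rightarrow> ('x list \<Rightarrow> 'k::field)" where
  "wbr u w = wbr_rev u (rev w)"

definition fsupp :: "('x list \<Rightarrow> 'k::field) \<Rightarrow> 'x list set" where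
  "fsupp \<phi> = {w. \<phi> w \<noteq> 0}"

definition free_carrier :: "('x list \<Rightarrow> 'k::field) set" where
  "free_carrier = {\<phi>. finite (fsupp \<phi>) \<and> \<phi> [] = 0}"

definition fbr :: "('x list \<Rightarrow> 'k::field) \<Rightarrow> ('x list \<Rightarrow> 'k) \<Rightarrow> ('x list \<Rightarrow> 'k)" where
  "fbr \<phi> \<psi> = (\<Sum>u\<in>fsupp \<phi>. \<Sum>w\<in>fsupp \<psi>. fsc (\<phi> u * \<psi> w) (wbr u w))"

(* canonical free presentation of q (generators = all elements of q):
   the homomorphism sending the word x1...xn to [..[[x1,x2],x3],..,xn] *)
definition left_normed :: "('b \<Rightarrow> 'b \<Rightarrow> 'b) \<Rightarrow> 'b list \<Rightarrow> 'b" where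
  "left_normed br w = foldl br (hd w) (tl w)"

definition pres_map :: "('k::field \<Rightarrow> 'b::ab_group_add \<Rightarrow> 'b) \<Rightarrow> ('b \<Rightarrow> 'b \<Rightarrow> 'b) \<Rightarrow> ('b list \<Rightarrow> 'k) \<Rightarrow> 'b" where
  "pres_map sc br \<phi> = (\<Sum>w\<in>fsupp \<phi>. sc (\<phi> w) (left_normed br w))"

definition pres_ker :: "('k::field \<Rightarrow> 'b::ab_group_add \<Rightarrow> 'b) \<Rightarrow> ('b \<Rightarrow> 'b \<Rightarrow> 'b) \<Rightarrow> ('b list \<Rightarrow> 'k) set" where
  "pres_ker sc br = {\<phi> \<in> free_carrier. pres_map sc br \<phi> = 0}"

(* M^Lie(q) = 0, computed via the canonical free presentation 0 -> r -> f -> q -> 0: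
   (r \<inter> [f,f]_Lie) / [f,r]_Lie = 0 *)
definition schur_lie_zero :: "('k::field \<Rightarrow> 'b::ab_group_add \<Rightarrow> 'b) \<Rightarrow> ('b \<Rightarrow> 'b \<Rightarrow> 'b) \<Rightarrow> bool" where
  "schur_lie_zero sc br \<longleftrightarrow>
     pres_ker sc br \<inter> lie_sp (fsc :: 'k \<Rightarrow> _) fbr free_carrier free_carrier
       \<subseteq> lie_sp (fsc :: 'k \<Rightarrow> _) fbr free_carrier (pres_ker sc br)"

end

theory Submission
  imports Defs
begin

(*
  Let K be the kernel of f. Lifting the generators of the free Leibniz algebra F on the elements
  of q along a section of f gives a homomorphism \<psi> : F \<rightarrow> g with f \<circ> \<psi> the canonical presentation
  map, so \<psi> \<rho> \<in> K exactly for \<rho> in the relation space R. Since \<psi> is onto modulo K, every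
  symmetrised bracket of g is \<psi> of one of F plus an element of [K,g]_Lie. So an element k of
  K \<subseteq> [g,g]_Lie is \<psi> \<rho> + j with j \<in> [K,g]_Lie and \<rho> \<in> R \<inter> [F,F]_Lie = [F,R]_Lie, the equality
  being M^Lie(q) = 0; and \<psi> maps [F,R]_Lie into [K,g]_Lie. Hence K \<subseteq> [K,g]_Lie, so K lies in every
  term of the lower Lie-central series and vanishes by nilpotency.

  For the second claim the quotient map g \<rightarrow> g/[g,g]_Lie is then an isomorphism, and M^Lie is
  invariant under isomorphisms: relabelling the generators of the free algebra along one carries
  the canonical presentation of its source onto that of its target.
*)

section \<open>Symmetrised bracket spans\<close>

context vector_space
begin

lemma subspace_lie_sp: "subspace (lie_sp scale b X Y)"
  by (simp add: lie_sp_def)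

lemma lie_sp_generator: "m \<in> X \<Longrightarrow> n \<in> Y \<Longrightarrow> b m n + b n m \<in> lie_sp scale b X Y"
  unfolding lie_sp_def by (rule span_base) blast

lemma lie_sp_least:
  assumes "subspace T" and "\<And>m n. m \<in> X \<Longrightarrow> n \<in> Y \<Longrightarrow> b m n + b n m \<in> T"
  shows "lie_sp scale b X Y \<subseteq> T"
  unfolding lie_sp_def by (rule span_minimal) (use assms in auto)

lemma lie_sp_mono: "X \<subseteq> X' \<Longrightarrow> Y \<subseteq> Y' \<Longrightarrow> lie_sp scale b X Y \<subseteq> lie_sp scale b X' Y'"
  unfolding lie_sp_def by (rule span_mono) blast

lemma lie_sp_commute: "lie_sp scale b X Y = lie_sp scale b Y X"
  unfolding lie_sp_def by (rule arg_cong[where f = span]) (metis add.commute)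

lemma lie_sp_subset:
  assumes "subspace C" "X \<subseteq> C" "Y \<subseteq> C" "\<forall>x\<in>C. \<forall>y\<in>C. b x y \<in> C"
  shows "lie_sp scale b X Y \<subseteq> C"
  by (rule lie_sp_least) (use assms in \<open>blast intro: subspace_add\<close>)+

lemma subset_zero_if_subset_lie_sp:
  assumes "lie_nilpotent scale b UNIV" and K: "K \<subseteq> lie_sp scale b K UNIV"
  shows "K \<subseteq> {0}"
proof -
  have "K \<subseteq> lie_lcs scale b UNIV n" for n
  proof (induct n)
    case (Suc n)
    with K show ?case by (auto dest: lie_sp_mono[of K _ UNIV UNIV b])
  qed simp
  with assms(1) show ?thesis by (auto simp: lie_nilpotent_def)
qed

end

section \<open>Homomorphisms on a subspace\<close>

definition leib_hom_on :: "('k::field \<Rightarrow> 'a::ab_group_add \<Rightarrow> 'a) \<Rightarrow> ('a \<Rightarrow> 'a \<Rightarrow> 'a)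
    \<Rightarrow> ('k \<Rightarrow> 'b::ab_group_add \<Rightarrow> 'b) \<Rightarrow> ('b \<Rightarrow> 'b \<Rightarrow> 'b) \<Rightarrow> 'a set \<Rightarrow> ('a \<Rightarrow> 'b) \<Rightarrow> bool" where
  "leib_hom_on sa ba sb bb C \<phi> \<longleftrightarrow>
     (\<forall>x\<in>C. \<forall>y\<in>C. \<phi> (x + y) = \<phi> x + \<phi> y \<and> \<phi> (ba x y) = bb (\<phi> x) (\<phi> y))
     \<and> (\<forall>c. \<forall>x\<in>C. \<phi> (sa c x) = sb c (\<phi> x))"

lemma subspace_image_linear_on:
  assumes m1: "module s1" and m2: "module s2" and T: "module.subspace s1 T"
    and add: "\<And>x y. x \<in> T \<Longrightarrow> y \<in> T \<Longrightarrow> \<phi> (x + y) = \<phi> x + \<phi> y"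
    and scale: "\<And>c x. x \<in> T \<Longrightarrow> \<phi> (s1 c x) = s2 c (\<phi> x)"
  shows "module.subspace s2 (\<phi> ` T)"
proof (rule module.subspaceI[OF m2])
  have "0 \<in> T" by (rule module.subspace_0[OF m1 T])
  moreover from this have "\<phi> 0 = 0" using add[of 0 0] by simp
  ultimately show "0 \<in> \<phi> ` T" by force
next
  fix y z assume "y \<in> \<phi> ` T" "z \<in> \<phi> ` T"
  then obtain u v where "u \<in> T" "v \<in> T" "y = \<phi> u" "z = \<phi> v" by blast
  then show "y + z \<in> \<phi> ` T" by (metis add image_eqI module.subspace_add[OF m1 T])
next
  fix c y assume "y \<in> \<phi> ` T"
  then obtain u where "u \<in> T" "y = \<phi> u" by blast
  then show "s2 c y \<in> \<phi> ` T" by (metis scale image_eqI module.subspace_scale[OF m1 T])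
qed

lemma span_image_linear_on:
  assumes m1: "module s1" and m2: "module s2"
    and C: "module.subspace s1 C" and S: "S \<subseteq> C"
    and add: "\<And>x y. x \<in> C \<Longrightarrow> y \<in> C \<Longrightarrow> \<phi> (x + y) = \<phi> x + \<phi> y"
    and scale: "\<And>c x. x \<in> C \<Longrightarrow> \<phi> (s1 c x) = s2 c (\<phi> x)"
  shows "\<phi> ` module.span s1 S = module.span s2 (\<phi> ` S)"
proof
  have span_C: "module.span s1 S \<subseteq> C"
    by (rule module.span_minimal[OF m1 S C])
  have "module.subspace s2 (\<phi> ` module.span s1 S)"
    by (rule subspace_image_linear_on[OF m1 m2 module.subspace_span[OF m1]])
      (use span_C add scale in blast)+
  then show "module.span s2 (\<phi> ` S) \<subseteq> \<phi> ` module.span s1 S"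
    by (rule module.span_minimal[OF m2, rotated]) (auto intro: module.span_base[OF m1])
  have zero: "\<phi> 0 = 0"
    using add[of 0 0] module.subspace_0[OF m1 C] by simp
  have "x \<in> C \<and> \<phi> x \<in> module.span s2 (\<phi> ` S)" if "x \<in> module.span s1 S" for x
    using that
  proof (rule module.span_induct_alt[OF m1])
    show "0 \<in> C \<and> \<phi> 0 \<in> module.span s2 (\<phi> ` S)"
      using module.subspace_0[OF m1 C] module.span_zero[OF m2] zero by simp
  next
    fix c u z assume u: "u \<in> S" and z: "z \<in> C \<and> \<phi> z \<in> module.span s2 (\<phi> ` S)"
    have "u \<in> C" "s1 c u \<in> C" using u S module.subspace_scale[OF m1 C] by blast+
    with u z show "s1 c u + z \<in> C \<and> \<phi> (s1 c u + z) \<in> module.span s2 (\<phi> ` S)"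
      by (simp add: add scale module.subspace_add[OF m1 C] module.span_add[OF m2]
          module.span_scale[OF m2] module.span_base[OF m2])
  qed
  then show "\<phi> ` module.span s1 S \<subseteq> module.span s2 (\<phi> ` S)" by blast
qed

lemma lie_sp_image:
  assumes v1: "vector_space s1" and v2: "vector_space s2"
    and C: "module.subspace s1 C" and C_br: "\<forall>x\<in>C. \<forall>y\<in>C. b1 x y \<in> C"
    and \<phi>: "leib_hom_on s1 b1 s2 b2 C \<phi>" and X: "X \<subseteq> C" and Y: "Y \<subseteq> C"
  shows "\<phi> ` lie_sp s1 b1 X Y = lie_sp s2 b2 (\<phi> ` X) (\<phi> ` Y)"
proof -
  let ?G = "{b1 m n + b1 n m | m n. m \<in> X \<and> n \<in> Y}"
  have m1: "module s1" and m2: "module s2"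
    using v1 v2 by (simp_all add: module_iff_vector_space)
  have G: "?G \<subseteq> C"
    using X Y C_br by (blast intro: module.subspace_add[OF m1 C])
  have gen: "\<phi> (b1 m n + b1 n m) = b2 (\<phi> m) (\<phi> n) + b2 (\<phi> n) (\<phi> m)"
    if "m \<in> C" "n \<in> C" for m n
    using \<phi> that C_br unfolding leib_hom_on_def by simp
  have "\<phi> ` ?G = {b2 m n + b2 n m | m n. m \<in> \<phi> ` X \<and> n \<in> \<phi> ` Y}"
  proof (intro equalityI subsetI)
    fix z assume "z \<in> \<phi> ` ?G"
    then obtain m n where mn: "m \<in> X" "n \<in> Y" and z: "z = \<phi> (b1 m n + b1 n m)" by blast
    have "z = b2 (\<phi> m) (\<phi> n) + b2 (\<phi> n) (\<phi> m)"
      using mn by (simp add: z gen subsetD[OF X] subsetD[OF Y])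
    with mn show "z \<in> {b2 m n + b2 n m | m n. m \<in> \<phi> ` X \<and> n \<in> \<phi> ` Y}" by blast
  next
    fix z assume "z \<in> {b2 m n + b2 n m | m n. m \<in> \<phi> ` X \<and> n \<in> \<phi> ` Y}"
    then obtain m n where mn: "m \<in> X" "n \<in> Y"
      and z: "z = b2 (\<phi> m) (\<phi> n) + b2 (\<phi> n) (\<phi> m)" by blast
    have "z = \<phi> (b1 m n + b1 n m)"
      using mn by (simp add: z gen subsetD[OF X] subsetD[OF Y])
    with mn show "z \<in> \<phi> ` ?G" by blast
  qed
  moreover have "\<phi> ` module.span s1 ?G = module.span s2 (\<phi> ` ?G)"
    by (rule span_image_linear_on[OF m1 m2 C G]) (use \<phi> in \<open>simp_all add: leib_hom_on_def\<close>)
  ultimately show ?thesis by (simp add: lie_sp_def)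
qed

section \<open>Leibniz algebras\<close>

locale leibniz_algebra =
  fixes sc :: "'k::field \<Rightarrow> 'a::ab_group_add \<Rightarrow> 'a" and br :: "'a \<Rightarrow> 'a \<Rightarrow> 'a"
  assumes leibniz: "leibniz sc UNIV br"
begin

sublocale vector_space sc
  using leibniz by (simp add: leibniz_def)

lemma bracket_add_left: "br (x + y) z = br x z + br y z"
  and bracket_add_right: "br x (y + z) = br x y + br x z"
  and bracket_scale_left: "br (sc c x) y = sc c (br x y)"
  and bracket_scale_right: "br x (sc c y) = sc c (br x y)"
  and leibniz_identity: "br x (br y z) = br (br x y) z - br (br x z) y"
  using leibniz by (simp_all add: leibniz_def)

lemma bracket_zero_left [simp]: "br 0 y = 0"
  using bracket_add_left[of 0 0 y] by simp

lemma bracket_zero_right [simp]: "br y 0 = 0"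
  using bracket_add_right[of y 0 0] by simp

lemma bracket_diff_left: "br (x - y) z = br x z - br y z"
  by (metis add_diff_cancel bracket_add_left diff_add_cancel)

lemma bracket_diff_right: "br z (x - y) = br z x - br z y"
  by (metis add_diff_cancel bracket_add_right diff_add_cancel)

lemma bracket_sum_left: "br (sum g S) y = (\<Sum>i\<in>S. br (g i) y)"
  by (induct S rule: infinite_finite_induct) (simp_all add: bracket_add_left)

lemma bracket_sum_right: "br y (sum g S) = (\<Sum>i\<in>S. br y (g i))"
  by (induct S rule: infinite_finite_induct) (simp_all add: bracket_add_right)

lemma lie_sp_UNIV_subset_image_sums:
  fixes sF :: "'k \<Rightarrow> 'f::ab_group_add \<Rightarrow> 'f" and bF :: "'f \<Rightarrow> 'f \<Rightarrow> 'f"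
    and \<psi> :: "'f \<Rightarrow> 'a" and C :: "'f set"
  assumes F: "vector_space sF" and C: "module.subspace sF C" and C_br: "\<forall>x\<in>C. \<forall>y\<in>C. bF x y \<in> C"
    and \<psi>: "leib_hom_on sF bF sc br C \<psi>"
    and cover: "\<And>x. \<exists>\<rho>\<in>C. x - \<psi> \<rho> \<in> K"
  shows "lie_sp sc br UNIV UNIV
    \<subseteq> {y + j | y j. y \<in> \<psi> ` lie_sp sF bF C C \<and> j \<in> lie_sp sc br K UNIV}"
proof (rule lie_sp_least)
  show "subspace {y + j | y j. y \<in> \<psi> ` lie_sp sF bF C C \<and> j \<in> lie_sp sc br K UNIV}"
    by (rule subspace_sums) (simp_all add: subspace_lie_sp
        lie_sp_image[OF F vector_space_axioms C C_br \<psi> order_refl order_refl])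
next
  fix a b :: 'a
  obtain \<alpha> \<beta> where \<alpha>: "\<alpha> \<in> C" "a - \<psi> \<alpha> \<in> K" and \<beta>: "\<beta> \<in> C" "b - \<psi> \<beta> \<in> K"
    using cover by meson
  have "\<psi> (bF \<alpha> \<beta> + bF \<beta> \<alpha>) = br (\<psi> \<alpha>) (\<psi> \<beta>) + br (\<psi> \<beta>) (\<psi> \<alpha>)"
    using \<psi> \<alpha> \<beta> C_br unfolding leib_hom_on_def by simp
  then have "br a b + br b a = \<psi> (bF \<alpha> \<beta> + bF \<beta> \<alpha>)
      + ((br (a - \<psi> \<alpha>) b + br b (a - \<psi> \<alpha>)) + (br (b - \<psi> \<beta>) (\<psi> \<alpha>) + br (\<psi> \<alpha>) (b - \<psi> \<beta>)))"
    by (simp add: bracket_diff_left bracket_diff_right algebra_simps)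
  moreover have "\<psi> (bF \<alpha> \<beta> + bF \<beta> \<alpha>) \<in> \<psi> ` lie_sp sF bF C C"
    using vector_space.lie_sp_generator[OF F \<alpha>(1) \<beta>(1)] by blast
  moreover have "(br (a - \<psi> \<alpha>) b + br b (a - \<psi> \<alpha>))
      + (br (b - \<psi> \<beta>) (\<psi> \<alpha>) + br (\<psi> \<alpha>) (b - \<psi> \<beta>)) \<in> lie_sp sc br K UNIV"
    using \<alpha> \<beta> by (intro subspace_add[OF subspace_lie_sp] lie_sp_generator) auto
  ultimately show "br a b + br b a
      \<in> {y + j | y j. y \<in> \<psi> ` lie_sp sF bF C C \<and> j \<in> lie_sp sc br K UNIV}"
    by blast
qed

lemma ideal_subset_lie_sp_ideal:
  fixes sF :: "'k \<Rightarrow> 'f::ab_group_add \<Rightarrow> 'f" and bF :: "'f \<Rightarrow> 'f \<Rightarrow> 'f"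
    and \<psi> :: "'f \<Rightarrow> 'a" and C :: "'f set"
  assumes F: "vector_space sF" and C: "module.subspace sF C" and C_br: "\<forall>x\<in>C. \<forall>y\<in>C. bF x y \<in> C"
    and \<psi>: "leib_hom_on sF bF sc br C \<psi>"
    and K: "subspace K" "lie_sp sc br K UNIV \<subseteq> K" "K \<subseteq> lie_sp sc br UNIV UNIV"
    and cover: "\<And>x. \<exists>\<rho>\<in>C. x - \<psi> \<rho> \<in> K"
    and schur: "{\<rho>\<in>C. \<psi> \<rho> \<in> K} \<inter> lie_sp sF bF C C \<subseteq> lie_sp sF bF C {\<rho>\<in>C. \<psi> \<rho> \<in> K}"
  shows "K \<subseteq> lie_sp sc br K UNIV"
proof -
  define J where "J = lie_sp sc br K UNIV"
  define R where "R = {\<rho>\<in>C. \<psi> \<rho> \<in> K}"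
  have FF_C: "lie_sp sF bF C C \<subseteq> C"
    by (rule vector_space.lie_sp_subset[OF F C order_refl order_refl C_br])
  have "\<psi> ` lie_sp sF bF C R = lie_sp sc br (\<psi> ` C) (\<psi> ` R)"
    by (rule lie_sp_image[OF F vector_space_axioms C C_br \<psi> order_refl]) (auto simp: R_def)
  also have "\<dots> \<subseteq> J"
    unfolding J_def by (subst lie_sp_commute, rule lie_sp_mono) (auto simp: R_def)
  finally have image_FR: "\<psi> ` lie_sp sF bF C R \<subseteq> J" .
  show "K \<subseteq> J"
  proof
    fix k assume k: "k \<in> K"
    then obtain \<rho> j where \<rho>: "\<rho> \<in> lie_sp sF bF C C" and j: "j \<in> J" and k_eq: "k = \<psi> \<rho> + j"
      using K(3) lie_sp_UNIV_subset_image_sums[OF F C C_br \<psi> cover] unfolding J_def by blast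
    have "\<psi> \<rho> = k - j" using k_eq by simp
    then have "\<psi> \<rho> \<in> K"
      using k j K(1,2) unfolding J_def by (auto intro: subspace_diff)
    then have "\<rho> \<in> R \<inter> lie_sp sF bF C C" using \<rho> FF_C by (auto simp: R_def)
    then have "\<psi> \<rho> \<in> J" using schur image_FR unfolding R_def by blast
    with j k_eq show "k \<in> J" unfolding J_def by (simp add: subspace_add subspace_lie_sp)
  qed
qed

end

section \<open>The free Leibniz algebra\<close>

lemma sum_fun_apply: "sum g S x = (\<Sum>i\<in>S. g i x)"
  by (induct S rule: infinite_finite_induct) simp_all

lemma vector_space_fsc: "vector_space (fsc :: 'k::field \<Rightarrow> ('x list \<Rightarrow> 'k) \<Rightarrow> _)"
  by unfold_locales (simp_all add: fsc_def fun_eq_iff distrib_left distrib_right)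

lemma module_fsc: "module (fsc :: 'k::field \<Rightarrow> ('x list \<Rightarrow> 'k) \<Rightarrow> _)"
  using vector_space_fsc module_iff_vector_space by blast

lemma fsc_apply [simp]: "fsc c \<phi> w = c * \<phi> w"
  by (simp add: fsc_def)

lemma fsupp_fdelta: "fsupp (fdelta u :: 'x list \<Rightarrow> 'k::field) = {u}"
  by (auto simp: fsupp_def fdelta_def)

lemma fsupp_fapp: "fsupp (fapp v \<phi>) = (\<lambda>w. w @ [v]) ` fsupp \<phi>"
proof
  show "fsupp (fapp v \<phi>) \<subseteq> (\<lambda>w. w @ [v]) ` fsupp \<phi>"
  proof
    fix w assume "w \<in> fsupp (fapp v \<phi>)"
    then have w: "w \<noteq> []" "last w = v" "\<phi> (butlast w) \<noteq> 0"
      by (simp_all add: fsupp_def fapp_def split: if_splits)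
    then have "w = butlast w @ [v]" by (metis append_butlast_last_id)
    with w(3) show "w \<in> (\<lambda>w. w @ [v]) ` fsupp \<phi>" by (auto simp: fsupp_def)
  qed
qed (auto simp: fsupp_def fapp_def)

lemma fsupp_add_subset: "fsupp (\<phi> + \<chi>) \<subseteq> fsupp \<phi> \<union> fsupp \<chi>"
  and fsupp_diff_subset: "fsupp (\<phi> - \<chi>) \<subseteq> fsupp \<phi> \<union> fsupp \<chi>"
  and fsupp_fsc_subset: "fsupp (fsc c \<phi>) \<subseteq> fsupp \<phi>"
  by (auto simp: fsupp_def)

lemma fsupp_zero [simp]: "fsupp 0 = {}"
  by (simp add: fsupp_def)

lemma fsupp_sum_subset: "fsupp (sum g S) \<subseteq> (\<Union>i\<in>S. fsupp (g i))"
proof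
  fix w assume "w \<in> fsupp (sum g S)"
  then have "(\<Sum>i\<in>S. g i w) \<noteq> 0" by (simp add: fsupp_def sum_fun_apply)
  then obtain i where "i \<in> S" "g i w \<noteq> 0" by (meson sum.neutral)
  then show "w \<in> (\<Union>i\<in>S. fsupp (g i))" by (auto simp: fsupp_def)
qed

lemma finite_fsupp_wbr_rev: "finite (fsupp (wbr_rev u r))"
proof (induct u r rule: wbr_rev.induct)
  case (3 u v v' r)
  then show ?case
    by (simp only: wbr_rev.simps) (rule finite_subset[OF fsupp_diff_subset], simp add: fsupp_fapp)
next
  case (1 u)
  show ?case by (simp add: fsupp_def)
qed (simp add: fsupp_fdelta)

lemma wbr_rev_apply_Nil: "wbr_rev u r [] = 0"
  by (induct u r rule: wbr_rev.induct) (auto simp: fdelta_def fapp_def)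

lemma free_carrier_iff: "\<phi> \<in> free_carrier \<longleftrightarrow> finite (fsupp \<phi>) \<and> \<phi> [] = 0"
  by (simp add: free_carrier_def)

lemma free_carrier_finite_fsupp: "\<phi> \<in> free_carrier \<Longrightarrow> finite (fsupp \<phi>)"
  by (simp add: free_carrier_iff)

lemma free_carrier_fsupp_nonempty: "\<phi> \<in> free_carrier \<Longrightarrow> w \<in> fsupp \<phi> \<Longrightarrow> w \<noteq> []"
  by (auto simp: free_carrier_iff fsupp_def)

lemma wbr_rev_in_free_carrier: "wbr_rev u r \<in> free_carrier"
  by (simp add: free_carrier_iff finite_fsupp_wbr_rev wbr_rev_apply_Nil)

lemma wbr_in_free_carrier: "wbr u w \<in> free_carrier"
  by (simp add: wbr_def wbr_rev_in_free_carrier)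

lemma fdelta_in_free_carrier: "w \<noteq> [] \<Longrightarrow> fdelta w \<in> free_carrier"
  by (simp add: free_carrier_iff fsupp_fdelta) (simp add: fdelta_def)

lemma subspace_free_carrier: "module.subspace (fsc :: 'k::field \<Rightarrow> ('x list \<Rightarrow> 'k) \<Rightarrow> _) free_carrier"
  by (rule module.subspaceI[OF module_fsc])
    (auto simp: free_carrier_iff intro: finite_subset[OF fsupp_add_subset] finite_subset[OF fsupp_fsc_subset])

lemma fbr_in_free_carrier: "fbr \<phi> \<chi> \<in> free_carrier"
  unfolding fbr_def
  by (intro module.subspace_sum[OF module_fsc subspace_free_carrier]
      module.subspace_scale[OF module_fsc subspace_free_carrier] wbr_in_free_carrier)

section \<open>Lifting maps on generators\<close>

definition free_lift :: "('k::field \<Rightarrow> 'a::ab_group_add \<Rightarrow> 'a) \<Rightarrow> ('a \<Rightarrow> 'a \<Rightarrow> 'a)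
    \<Rightarrow> ('x \<Rightarrow> 'a) \<Rightarrow> ('x list \<Rightarrow> 'k) \<Rightarrow> 'a" where
  "free_lift sc br s \<phi> = (\<Sum>w\<in>fsupp \<phi>. sc (\<phi> w) (left_normed br (map s w)))"

lemma pres_map_eq_free_lift: "pres_map sc br = free_lift sc br id"
  by (simp add: fun_eq_iff pres_map_def free_lift_def)

lemma left_normed_single: "left_normed br [v] = v"
  by (simp add: left_normed_def)

lemma left_normed_snoc: "w \<noteq> [] \<Longrightarrow> left_normed br (w @ [v]) = br (left_normed br w) v"
  by (cases w) (simp_all add: left_normed_def)

lemma leib_hom_module_hom: "leib_hom sa ba sb bb h \<Longrightarrow> module_hom sa sb h"
  by (simp add: leib_hom_def module_hom_iff_linear)

lemma leib_hom_bracket: "leib_hom sa ba sb bb h \<Longrightarrow> h (ba x y) = bb (h x) (h y)"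
  by (simp add: leib_hom_def)

lemma leib_hom_left_normed:
  assumes "leib_hom sa ba sb bb h" "w \<noteq> []"
  shows "h (left_normed ba w) = left_normed bb (map h w)"
proof -
  have "h (foldl ba a xs) = foldl bb (h a) (map h xs)" for a xs
    by (induct xs arbitrary: a) (simp_all add: leib_hom_bracket[OF assms(1)])
  with assms(2) show ?thesis by (cases w) (simp_all add: left_normed_def)
qed

lemma leib_hom_free_lift:
  assumes h: "leib_hom sa ba sb bb h" and \<phi>: "\<phi> \<in> free_carrier"
  shows "h (free_lift sa ba s \<phi>) = free_lift sb bb (h \<circ> s) \<phi>"
  using free_carrier_fsupp_nonempty[OF \<phi>]
  by (simp add: free_lift_def module_hom.sum[OF leib_hom_module_hom[OF h]]
      module_hom.scale[OF leib_hom_module_hom[OF h]] leib_hom_left_normed[OF h])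

context leibniz_algebra
begin

lemma free_lift_eq_sum:
  "finite S \<Longrightarrow> fsupp \<phi> \<subseteq> S \<Longrightarrow> free_lift sc br s \<phi> = (\<Sum>w\<in>S. sc (\<phi> w) (left_normed br (map s w)))"
  unfolding free_lift_def by (rule sum.mono_neutral_left) (auto simp: fsupp_def)

lemma free_lift_add:
  assumes "finite (fsupp \<phi>)" "finite (fsupp \<chi>)"
  shows "free_lift sc br s (\<phi> + \<chi>) = free_lift sc br s \<phi> + free_lift sc br s \<chi>"
  using assms fsupp_add_subset[of \<phi> \<chi>]
  by (simp add: free_lift_eq_sum[of "fsupp \<phi> \<union> fsupp \<chi>"] scale_left_distrib sum.distrib)

lemma free_lift_diff:
  assumes "finite (fsupp \<phi>)" "finite (fsupp \<chi>)"
  shows "free_lift sc br s (\<phi> - \<chi>) = free_lift sc br s \<phi> - free_lift sc br s \<chi>"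
  using assms fsupp_diff_subset[of \<phi> \<chi>]
  by (simp add: free_lift_eq_sum[of "fsupp \<phi> \<union> fsupp \<chi>"] scale_left_diff_distrib sum_subtractf)

lemma free_lift_fsc:
  assumes "finite (fsupp \<phi>)"
  shows "free_lift sc br s (fsc c \<phi>) = sc c (free_lift sc br s \<phi>)"
  using assms fsupp_fsc_subset[of c \<phi>]
  by (simp add: free_lift_eq_sum[of "fsupp \<phi>"] scale_sum_right)

lemma free_lift_sum:
  "(\<And>i. i \<in> I \<Longrightarrow> finite (fsupp (g i))) \<Longrightarrow>
     free_lift sc br s (sum g I) = (\<Sum>i\<in>I. free_lift sc br s (g i))"
proof (induct I rule: infinite_finite_induct)
  case (insert i I)
  have "finite (fsupp (sum g I))"
    by (rule finite_subset[OF fsupp_sum_subset]) (use insert in auto)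
  with insert have "free_lift sc br s (g i + sum g I) = free_lift sc br s (g i) + free_lift sc br s (sum g I)"
    by (intro free_lift_add) auto
  with insert show ?case by (simp only: sum.insert[OF insert(1,2)]) simp
qed (simp_all add: free_lift_def)

lemma free_lift_fdelta: "free_lift sc br s (fdelta w) = left_normed br (map s w)"
  by (simp add: free_lift_def fsupp_fdelta) (simp add: fdelta_def)

lemma free_lift_fapp:
  assumes \<phi>: "\<phi> \<in> free_carrier"
  shows "free_lift sc br s (fapp v \<phi>) = br (free_lift sc br s \<phi>) (s v)"
proof -
  have inj: "inj_on (\<lambda>w. w @ [v]) (fsupp \<phi>)" by (simp add: inj_on_def)
  have "free_lift sc br s (fapp v \<phi>)
      = (\<Sum>w\<in>fsupp \<phi>. sc (fapp v \<phi> (w @ [v])) (left_normed br (map s (w @ [v]))))"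
    by (simp only: free_lift_def fsupp_fapp sum.reindex[OF inj] o_def)
  also have "\<dots> = (\<Sum>w\<in>fsupp \<phi>. sc (\<phi> w) (br (left_normed br (map s w)) (s v)))"
    using free_carrier_fsupp_nonempty[OF \<phi>] by (intro sum.cong) (simp_all add: fapp_def left_normed_snoc)
  also have "\<dots> = br (free_lift sc br s \<phi>) (s v)"
    by (simp add: free_lift_def bracket_sum_left bracket_scale_left)
  finally show ?thesis .
qed

lemma free_lift_wbr_rev:
  "u \<noteq> [] \<Longrightarrow> r \<noteq> [] \<Longrightarrow>
     free_lift sc br s (wbr_rev u r) = br (left_normed br (map s u)) (left_normed br (map s (rev r)))"
proof (induct u r rule: wbr_rev.induct)
  case (2 u v)
  then show ?case by (simp add: free_lift_fdelta left_normed_snoc left_normed_single)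
next
  case (3 u v v' r)
  let ?L = "\<lambda>w. left_normed br (map s w)"
  have fin: "finite (fsupp (fapp v (wbr_rev u (v' # r))))"
    by (simp add: fsupp_fapp finite_fsupp_wbr_rev)
  have "free_lift sc br s (wbr_rev u (v # v' # r))
      = br (br (?L u) (?L (rev (v' # r)))) (s v) - br (br (?L u) (s v)) (?L (rev (v' # r)))"
    using 3 by (simp add: free_lift_diff[OF fin finite_fsupp_wbr_rev]
        free_lift_fapp[OF wbr_rev_in_free_carrier] left_normed_snoc)
  also have "\<dots> = br (?L u) (br (?L (rev (v' # r))) (s v))"
    by (simp only: leibniz_identity)
  also have "\<dots> = br (?L u) (?L (rev (v' # r) @ [v]))"
    using left_normed_snoc[of "map s (rev (v' # r))" br "s v"] by simp
  also have "\<dots> = br (?L u) (?L (rev (v # v' # r)))"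
    by simp
  finally show ?case .
qed simp

lemma free_lift_fbr:
  assumes \<phi>: "\<phi> \<in> free_carrier" and \<chi>: "\<chi> \<in> free_carrier"
  shows "free_lift sc br s (fbr \<phi> \<chi>) = br (free_lift sc br s \<phi>) (free_lift sc br s \<chi>)"
proof -
  have fin: "finite (fsupp (fsc c (wbr u w)))" for c u w
    by (intro free_carrier_finite_fsupp module.subspace_scale[OF module_fsc subspace_free_carrier]
        wbr_in_free_carrier)
  have fin_sum: "finite (fsupp (\<Sum>w\<in>W. fsc (c w) (wbr u w)))" for c u W
    by (intro free_carrier_finite_fsupp module.subspace_sum[OF module_fsc subspace_free_carrier]
        module.subspace_scale[OF module_fsc subspace_free_carrier] wbr_in_free_carrier)
  have "free_lift sc br s (fbr \<phi> \<chi>)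
      = (\<Sum>u\<in>fsupp \<phi>. \<Sum>w\<in>fsupp \<chi>. sc (\<phi> u * \<chi> w) (free_lift sc br s (wbr u w)))"
    unfolding fbr_def
    by (simp add: free_lift_sum fin fin_sum free_lift_fsc free_carrier_finite_fsupp[OF wbr_in_free_carrier])
  also have "\<dots> = (\<Sum>u\<in>fsupp \<phi>. \<Sum>w\<in>fsupp \<chi>.
      sc (\<phi> u * \<chi> w) (br (left_normed br (map s u)) (left_normed br (map s w))))"
    using free_carrier_fsupp_nonempty[OF \<phi>] free_carrier_fsupp_nonempty[OF \<chi>]
    by (intro sum.cong) (simp_all add: wbr_def free_lift_wbr_rev)
  also have "\<dots> = br (free_lift sc br s \<phi>) (free_lift sc br s \<chi>)"
    by (simp only: free_lift_def bracket_sum_left,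
        simp only: bracket_sum_right bracket_scale_left bracket_scale_right scale_scale mult.commute)
  finally show ?thesis .
qed

lemma leib_hom_on_free_lift: "leib_hom_on fsc fbr sc br free_carrier (free_lift sc br s)"
  by (simp add: leib_hom_on_def free_carrier_finite_fsupp free_lift_add free_lift_fsc free_lift_fbr)

end

section \<open>Kernels inside the symmetrised derived algebra\<close>

lemma lie_sp_kernel_subset_kernel:
  assumes q: "leibniz_algebra sq bq" and f: "leib_hom sg bg sq bq f"
  shows "lie_sp sg bg {x. f x = 0} UNIV \<subseteq> {x. f x = 0}"
proof -
  interpret f: module_hom sg sq f by (rule leib_hom_module_hom[OF f])
  interpret q: leibniz_algebra sq bq by (rule q)
  have "vector_space sg" using f by (simp add: leib_hom_def linear_def)
  then show ?thesis
    by (rule vector_space.lie_sp_least[OF _ f.subspace_kernel])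
      (simp add: f.add leib_hom_bracket[OF f])
qed

lemma bij_if_kernel_subset_lie_sp:
  fixes sg :: "'k::field \<Rightarrow> 'a::ab_group_add \<Rightarrow> 'a" and sq :: "'k \<Rightarrow> 'b::ab_group_add \<Rightarrow> 'b"
    and f :: "'a \<Rightarrow> 'b"
  assumes g: "leibniz_algebra sg bg" and nil: "lie_nilpotent sg bg UNIV"
    and q: "leibniz_algebra sq bq" and f: "leib_hom sg bg sq bq f" "surj f"
    and ker: "{x. f x = 0} \<subseteq> lie_sp sg bg UNIV UNIV" and schur: "schur_lie_zero sq bq"
  shows "bij f"
proof -
  interpret g: leibniz_algebra sg bg by (rule g)
  interpret f: module_hom sg sq f by (rule leib_hom_module_hom[OF f(1)])
  define K where "K = {x. f x = 0}"
  let ?\<psi> = "free_lift sg bg (inv f)"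
  have f_\<psi>: "f (?\<psi> \<phi>) = pres_map sq bq \<phi>" if "\<phi> \<in> free_carrier" for \<phi>
    using leib_hom_free_lift[OF f(1) that] f(2) by (simp add: surj_iff pres_map_eq_free_lift)
  have cover: "\<exists>\<rho>\<in>free_carrier. x - ?\<psi> \<rho> \<in> K" for x
  proof
    show "fdelta [f x] \<in> free_carrier" by (simp add: fdelta_in_free_carrier)
    show "x - ?\<psi> (fdelta [f x]) \<in> K"
      using f(2) by (simp add: K_def g.free_lift_fdelta left_normed_single f.diff surj_f_inv_f)
  qed
  have "K \<subseteq> lie_sp sg bg K UNIV"
  proof (rule g.ideal_subset_lie_sp_ideal[OF vector_space_fsc subspace_free_carrier _
        g.leib_hom_on_free_lift _ _ _ cover])
    show "\<forall>x\<in>free_carrier. \<forall>y\<in>free_carrier. fbr x y \<in> free_carrier"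
      by (simp add: fbr_in_free_carrier)
    show "g.subspace K" unfolding K_def by (rule f.subspace_kernel)
    show "lie_sp sg bg K UNIV \<subseteq> K" unfolding K_def by (rule lie_sp_kernel_subset_kernel[OF q f(1)])
    show "K \<subseteq> lie_sp sg bg UNIV UNIV" unfolding K_def by (rule ker)
    have "{\<rho>\<in>free_carrier. ?\<psi> \<rho> \<in> K} = pres_ker sq bq"
      by (auto simp: K_def pres_ker_def f_\<psi>)
    with schur show "{\<rho>\<in>free_carrier. ?\<psi> \<rho> \<in> K} \<inter> lie_sp fsc fbr free_carrier free_carrier
        \<subseteq> lie_sp fsc fbr free_carrier {\<rho>\<in>free_carrier. ?\<psi> \<rho> \<in> K}"
      by (simp add: schur_lie_zero_def)
  qed
  then have "K \<subseteq> {0}" by (rule g.subset_zero_if_subset_lie_sp[OF nil])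
  then have "inj f" by (auto simp: K_def f.inj_iff_eq_0)
  with f(2) show ?thesis by (simp add: bij_def)
qed

section \<open>Relabelling generators\<close>

definition relabel :: "('x \<Rightarrow> 'y) \<Rightarrow> ('x list \<Rightarrow> 'k::field) \<Rightarrow> ('y list \<Rightarrow> 'k)" where
  "relabel h \<phi> = (\<lambda>w. \<phi> (map (inv h) w))"

lemma relabel_add: "relabel h (\<phi> + \<chi>) = relabel h \<phi> + relabel h \<chi>"
  and relabel_diff: "relabel h (\<phi> - \<chi>) = relabel h \<phi> - relabel h \<chi>"
  and relabel_fsc: "relabel h (fsc c \<phi>) = fsc c (relabel h \<phi>)"
  and relabel_sum: "relabel h (sum g S) = (\<Sum>i\<in>S. relabel h (g i))"
  by (simp_all add: relabel_def fun_eq_iff sum_fun_apply)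

lemma relabel_inv_relabel: "bij h \<Longrightarrow> relabel (inv h) (relabel h \<phi>) = \<phi>"
  by (simp add: relabel_def fun_eq_iff inv_inv_eq inv_o_cancel[OF bij_is_inj])

lemma relabel_relabel_inv: "bij h \<Longrightarrow> relabel h (relabel (inv h) \<phi>) = \<phi>"
  using relabel_inv_relabel[OF bij_imp_bij_inv, of h \<phi>] by (simp add: inv_inv_eq)

lemma inj_relabel: "bij h \<Longrightarrow> inj (relabel h)"
  by (rule inj_on_inverseI[where g = "relabel (inv h)"]) (simp add: relabel_inv_relabel)

lemma map_map_inv: "bij h \<Longrightarrow> map h (map (inv h) w) = w"
  by (induct w) (simp_all add: bij_is_surj surj_f_inv_f)

lemma map_inv_map: "bij h \<Longrightarrow> map (inv h) (map h w) = w"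
  by (induct w) (simp_all add: bij_is_inj inv_f_f)

lemma map_inv_eq_iff: "bij h \<Longrightarrow> map (inv h) w = u \<longleftrightarrow> w = map h u"
  by (metis map_inv_map map_map_inv)

lemma fsupp_relabel:
  assumes h: "bij h"
  shows "fsupp (relabel h \<phi>) = map h ` fsupp \<phi>"
proof
  show "fsupp (relabel h \<phi>) \<subseteq> map h ` fsupp \<phi>"
  proof
    fix w assume "w \<in> fsupp (relabel h \<phi>)"
    then have "map (inv h) w \<in> fsupp \<phi>" by (simp add: fsupp_def relabel_def)
    then show "w \<in> map h ` fsupp \<phi>" using map_map_inv[OF h, of w] by (metis image_eqI)
  qed
  show "map h ` fsupp \<phi> \<subseteq> fsupp (relabel h \<phi>)"
    using map_inv_map[OF h] by (auto simp: fsupp_def relabel_def)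
qed

lemma relabel_in_free_carrier: "bij h \<Longrightarrow> \<phi> \<in> free_carrier \<Longrightarrow> relabel h \<phi> \<in> free_carrier"
  by (simp add: free_carrier_iff fsupp_relabel) (simp add: relabel_def)

lemma relabel_image_free_carrier:
  fixes h :: "'x \<Rightarrow> 'y"
  assumes h: "bij h"
  shows "relabel h ` free_carrier = (free_carrier :: ('y list \<Rightarrow> 'k::field) set)"
proof
  show "relabel h ` free_carrier \<subseteq> (free_carrier :: ('y list \<Rightarrow> 'k) set)"
    using relabel_in_free_carrier[OF h] by blast
  show "(free_carrier :: ('y list \<Rightarrow> 'k) set) \<subseteq> relabel h ` free_carrier"
  proof
    fix \<phi> :: "'y list \<Rightarrow> 'k" assume "\<phi> \<in> free_carrier"
    then have "relabel (inv h) \<phi> \<in> free_carrier"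
      by (rule relabel_in_free_carrier[OF bij_imp_bij_inv[OF h]])
    with relabel_relabel_inv[OF h] show "\<phi> \<in> relabel h ` free_carrier" by (metis image_eqI)
  qed
qed

lemma relabel_fdelta: "bij h \<Longrightarrow> relabel h (fdelta u) = fdelta (map h u)"
  by (simp add: relabel_def fdelta_def fun_eq_iff map_inv_eq_iff)

lemma relabel_fapp:
  assumes h: "bij h"
  shows "relabel h (fapp v \<phi>) = fapp (h v) (relabel h \<phi>)"
proof
  fix w
  have "inv h y = v \<longleftrightarrow> y = h v" for y
    using h by (metis bij_inv_eq_iff)
  then show "relabel h (fapp v \<phi>) w = fapp (h v) (relabel h \<phi>) w"
    by (cases "w = []") (simp_all add: relabel_def fapp_def last_map map_butlast)
qed

lemma relabel_wbr_rev: "bij h \<Longrightarrow> relabel h (wbr_rev u r) = wbr_rev (map h u) (map h r)"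
proof (induct u r rule: wbr_rev.induct)
  case (1 u)
  show ?case by (simp add: relabel_def fun_eq_iff)
next
  case (2 u v)
  then show ?case by (simp add: relabel_fdelta)
next
  case (3 u v v' r)
  then show ?case by (simp only: wbr_rev.simps relabel_diff relabel_fapp list.map map_append)
qed

lemma relabel_fbr:
  assumes h: "bij h"
  shows "relabel h (fbr \<phi> \<chi>) = fbr (relabel h \<phi>) (relabel h \<chi>)"
proof -
  have inj: "inj_on (map h) A" for A
    by (rule inj_on_subset[OF inj_mapI[OF bij_is_inj[OF h]] subset_UNIV])
  have "fbr (relabel h \<phi>) (relabel h \<chi>) =
      (\<Sum>u\<in>map h ` fsupp \<phi>. \<Sum>w\<in>map h ` fsupp \<chi>. fsc (relabel h \<phi> u * relabel h \<chi> w) (wbr u w))"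
    by (simp only: fbr_def fsupp_relabel[OF h])
  also have "\<dots> = (\<Sum>u\<in>fsupp \<phi>. \<Sum>w\<in>fsupp \<chi>. fsc (\<phi> u * \<chi> w) (wbr (map h u) (map h w)))"
    by (simp add: sum.reindex[OF inj] relabel_def inv_o_cancel[OF bij_is_inj[OF h]])
  also have "\<dots> = relabel h (fbr \<phi> \<chi>)"
    by (simp add: fbr_def relabel_sum relabel_fsc wbr_def relabel_wbr_rev[OF h] rev_map)
  finally show ?thesis by simp
qed

lemma leib_hom_on_relabel: "bij h \<Longrightarrow> leib_hom_on fsc fbr fsc fbr UNIV (relabel h)"
  by (simp add: leib_hom_on_def relabel_add relabel_fsc relabel_fbr)

lemma free_lift_relabel:
  assumes h: "bij h"
  shows "free_lift sc br s (relabel h \<phi>) = free_lift sc br (s \<circ> h) \<phi>"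
proof -
  have inj: "inj_on (map h) (fsupp \<phi>)"
    by (rule inj_on_subset[OF inj_mapI[OF bij_is_inj[OF h]] subset_UNIV])
  have "free_lift sc br s (relabel h \<phi>)
      = (\<Sum>w\<in>map h ` fsupp \<phi>. sc (relabel h \<phi> w) (left_normed br (map s w)))"
    by (simp only: free_lift_def fsupp_relabel[OF h])
  also have "\<dots> = (\<Sum>w\<in>fsupp \<phi>. sc (relabel h \<phi> (map h w)) (left_normed br (map s (map h w))))"
    by (simp only: sum.reindex[OF inj] o_def)
  also have "\<dots> = free_lift sc br (s \<circ> h) \<phi>"
    unfolding free_lift_def relabel_def map_map inv_o_cancel[OF bij_is_inj[OF h]] list.map_id ..
  finally show ?thesis .
qed

lemma pres_map_relabel:
  assumes h: "leib_hom sa ba sb bb h" "bij h" and \<phi>: "\<phi> \<in> free_carrier"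
  shows "pres_map sb bb (relabel h \<phi>) = h (pres_map sa ba \<phi>)"
  by (simp only: pres_map_eq_free_lift free_lift_relabel[OF h(2)] leib_hom_free_lift[OF h(1) \<phi>]
      id_comp comp_id)

lemma relabel_image_pres_ker:
  assumes h: "leib_hom sa ba sb bb h" "bij h"
  shows "relabel h ` pres_ker sa ba = pres_ker sb bb"
proof -
  interpret h: module_hom sa sb h by (rule leib_hom_module_hom[OF h(1)])
  have h_eq_0: "h x = 0 \<longleftrightarrow> x = 0" for x
    using injD[OF bij_is_inj[OF h(2)], of x 0] by auto
  have iff: "\<phi> \<in> pres_ker sa ba \<longleftrightarrow> relabel h \<phi> \<in> pres_ker sb bb" if "\<phi> \<in> free_carrier" for \<phi>
    using that h(2) by (simp add: pres_ker_def pres_map_relabel[OF h] relabel_in_free_carrier h_eq_0)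
  show ?thesis
  proof (intro equalityI subsetI)
    fix \<chi> assume "\<chi> \<in> relabel h ` pres_ker sa ba"
    then obtain \<phi> where "\<phi> \<in> pres_ker sa ba" "\<chi> = relabel h \<phi>" by blast
    with iff show "\<chi> \<in> pres_ker sb bb" by (auto simp: pres_ker_def)
  next
    fix \<chi> assume \<chi>: "\<chi> \<in> pres_ker sb bb"
    then have "\<chi> \<in> relabel h ` free_carrier"
      by (simp add: relabel_image_free_carrier[OF h(2)] pres_ker_def)
    then obtain \<phi> where "\<phi> \<in> free_carrier" "\<chi> = relabel h \<phi>" by blast
    with iff \<chi> show "\<chi> \<in> relabel h ` pres_ker sa ba" by blast
  qed
qed

lemma schur_lie_zero_if_iso:
  fixes sa :: "'k::field \<Rightarrow> 'a::ab_group_add \<Rightarrow> 'a" and sb :: "'k \<Rightarrow> 'b::ab_group_add \<Rightarrow> 'b"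
    and h :: "'a \<Rightarrow> 'b"
  assumes h: "leib_hom sa ba sb bb h" "bij h" and schur: "schur_lie_zero sb bb"
  shows "schur_lie_zero sa ba"
proof -
  let ?T = "relabel h :: ('a list \<Rightarrow> 'k) \<Rightarrow> _"
  let ?C = "free_carrier :: ('a list \<Rightarrow> 'k) set"
  have T: "?T ` lie_sp fsc fbr X Y = lie_sp fsc fbr (?T ` X) (?T ` Y)" for X Y
    by (rule lie_sp_image[OF vector_space_fsc vector_space_fsc module.subspace_UNIV[OF module_fsc]
          _ leib_hom_on_relabel[OF h(2)]]) simp_all
  show ?thesis
    unfolding schur_lie_zero_def
  proof
    fix \<rho> assume "\<rho> \<in> pres_ker sa ba \<inter> lie_sp fsc fbr ?C ?C"
    then have "?T \<rho> \<in> ?T ` (pres_ker sa ba \<inter> lie_sp fsc fbr ?C ?C)" by (rule imageI)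
    also have "\<dots> = pres_ker sb bb \<inter> lie_sp fsc fbr free_carrier free_carrier"
      by (simp add: image_Int[OF inj_relabel[OF h(2)]] T relabel_image_free_carrier[OF h(2)]
          relabel_image_pres_ker[OF h])
    also have "\<dots> \<subseteq> lie_sp fsc fbr free_carrier (pres_ker sb bb)"
      using schur by (simp add: schur_lie_zero_def)
    also have "\<dots> = ?T ` lie_sp fsc fbr ?C (pres_ker sa ba)"
      by (simp add: T relabel_image_free_carrier[OF h(2)] relabel_image_pres_ker[OF h])
    finally show "\<rho> \<in> lie_sp fsc fbr ?C (pres_ker sa ba)"
      by (simp add: inj_image_mem_iff[OF inj_relabel[OF h(2)]])
  qed
qed

theorem mainTheorem10:
  fixes sg :: "'k::field \<Rightarrow> 'a::ab_group_add \<Rightarrow> 'a" and bg :: "'a \<Rightarrow> 'a \<Rightarrow> 'a"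
  assumes half: "(2::'k) \<noteq> 0"
    and g_leib: "leibniz sg UNIV bg"
    and g_nil: "lie_nilpotent sg bg UNIV"
  shows "(\<forall>(sq :: 'k \<Rightarrow> 'b::ab_group_add \<Rightarrow> 'b) bq (f :: 'a \<Rightarrow> 'b).
            leibniz sq UNIV bq \<and> leib_hom sg bg sq bq f \<and> surj f
            \<and> {x. f x = 0} \<subseteq> lie_sp sg bg UNIV UNIV \<and> schur_lie_zero sq bq
            \<longrightarrow> bij f)
       \<and> (\<forall>(sc :: 'k \<Rightarrow> 'c::ab_group_add \<Rightarrow> 'c) bc (p :: 'a \<Rightarrow> 'c).
            leibniz sc UNIV bc \<and> leib_hom sg bg sc bc p \<and> surj p
            \<and> {x. p x = 0} = lie_sp sg bg UNIV UNIV \<and> schur_lie_zero sc bc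
            \<longrightarrow> schur_lie_zero sg bg)"
proof -
  have g: "leibniz_algebra sg bg" using g_leib by (rule leibniz_algebra.intro)
  note bij = bij_if_kernel_subset_lie_sp[OF g g_nil leibniz_algebra.intro]
  show ?thesis
    by (auto intro: bij schur_lie_zero_if_iso[OF _ bij])
qed

end
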